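(* Let $n \geq 3$. Then $$\max_{G} T_{\min}(G) = \left\lfloor \tfrac{n}{2} \right\rfloor \cdot \left\lceil \tfrac{n}{2} \right\rceil \qquad\text{and}\qquad \max_{G} T_{\max}(G) = (n-1)^2,$$ where both maxima range over all strongly connected directed graphs $G$ on $n$ vertices.
   Context: Let $G=(V,E)$ be a strongly connected directed graph with $|V| = n$. An ordering is a bijection $\pi: V \to \{1,\dots,n\}$. For vertices $u,v$, let $d_G(u,v)$ denote the length (number of edges) of a shortest directed path from $u$ to $v$ in $G$. The communication time of ordering $\pi$ on $G$ is $$T(G,\pi) = \sum_{i=1}^{n-1} d_G\big(\pi^{-1}(i), \pi^{-1}(i+1)\big).$$ Define $T_{\min}(G) = \min_{\pi} T(G,\pi)$ and $T_{\max}(G) = \max_{\pi} T(G,\pi)$ over all orderings $\pi$. *)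

theory Defs
  imports Main
begin

definition strongly_connected :: "'a set \<Rightarrow> ('a \<times> 'a) set \<Rightarrow> bool" where
  "strongly_connected V E \<longleftrightarrow> E \<subseteq> V \<times> V \<and> (\<forall>u\<in>V. \<forall>v\<in>V. (u, v) \<in> E\<^sup>*)"

definition dist :: "('a \<times> 'a) set \<Rightarrow> 'a \<Rightarrow> 'a \<Rightarrow> nat" where
  "dist E u v = (LEAST k. (u, v) \<in> E ^^ k)"

definition orderings :: "'a set \<Rightarrow> ('a \<Rightarrow> nat) set" where
  "orderings V = {\<pi>. bij_betw \<pi> V {1..card V}}"

definition comm_time :: "'a set \<Rightarrow> ('a \<times> 'a) set \<Rightarrow> ('a \<Rightarrow> nat) \<Rightarrow> nat" where
  "comm_time V E \<pi> =
     (\<Sum>i = 1..<card V. dist E (inv_into V \<pi> i) (inv_into V \<pi> (i + 1)))"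

definition T_min :: "'a set \<Rightarrow> ('a \<times> 'a) set \<Rightarrow> nat" where
  "T_min V E = Min (comm_time V E ` orderings V)"

definition T_max :: "'a set \<Rightarrow> ('a \<times> 'a) set \<Rightarrow> nat" where
  "T_max V E = Max (comm_time V E ` orderings V)"

definition is_max :: "nat set \<Rightarrow> nat \<Rightarrow> bool" where
  "is_max S x \<longleftrightarrow> x \<in> S \<and> (\<forall>y\<in>S. y \<le> x)"

end

(* An ordering is a list of the vertices, and its communication time is the length of the
   tour visiting them in that order.  A shortest walk is a path, so all distances are at most
   n - 1 and T_max <= (n - 1)^2; the directed n-cycle traversed backwards attains this.
   If D is the diameter, following a shortest path of length D and then visiting the other
   n - 1 - D vertices in any order costs at most D + (n - 1 - D) D = D (n - D), which is at most
   floor(n/2) ceil(n/2).  For the lower bound take the (k+1)-cycle, k = ceil(n/2) - 1, with one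
   vertex replaced by n - k copies: by the triangle inequality every tour is at least as long as
   the tour through the copies alone, and distinct copies are k + 1 apart, because every edge
   advances the position along the cycle by one. *)

theory Submission
  imports Defs
begin

lemma relpow_dist:
  assumes "(u, v) \<in> E\<^sup>*"
  shows "(u, v) \<in> E ^^ dist E u v"
proof -
  obtain k where "(u, v) \<in> E ^^ k" using assms rtrancl_imp_relpow by blast
  then show ?thesis unfolding dist_def by (rule LeastI)
qed

lemma dist_le_relpow: "(u, v) \<in> E ^^ k \<Longrightarrow> dist E u v \<le> k"
  unfolding dist_def by (rule Least_le)

lemma dist_triangle:
  assumes "(x, y) \<in> E\<^sup>*" "(y, z) \<in> E\<^sup>*"
  shows "dist E x z \<le> dist E x y + dist E y z"
proof -
  have "(x, z) \<in> E ^^ (dist E x y + dist E y z)"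
    using relpow_dist[OF assms(1)] relpow_dist[OF assms(2)] by (auto simp: relpow_add)
  then show ?thesis by (rule dist_le_relpow)
qed

lemma relpow_walk_segment:
  assumes "\<forall>t<d. (f t, f (Suc t)) \<in> E" "i \<le> j" "j \<le> d"
  shows "(f i, f j) \<in> E ^^ (j - i)"
  unfolding relpow_fun_conv
  using assms by (intro exI[of _ "\<lambda>t. f (i + t)"]) auto

text \<open>A shortest walk visits no vertex twice: a repetition could be cut out.\<close>
lemma shortest_walk:
  assumes "(u, v) \<in> E\<^sup>*"
  obtains f where "f 0 = u" "f (dist E u v) = v"
    "\<forall>t<dist E u v. (f t, f (Suc t)) \<in> E" "inj_on f {0..dist E u v}"
proof -
  let ?d = "dist E u v"
  obtain f where f: "f 0 = u" "f ?d = v" and walk: "\<forall>t<?d. (f t, f (Suc t)) \<in> E"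
    using relpow_dist[OF assms] unfolding relpow_fun_conv by blast
  have "i = j" if "i < j" "j \<le> ?d" "f i = f j" for i j
  proof -
    have "(u, f i) \<in> E ^^ i" "(f j, v) \<in> E ^^ (?d - j)"
      using relpow_walk_segment[OF walk, of 0 i] relpow_walk_segment[OF walk, of j ?d] f that
      by auto
    then have "(u, v) \<in> E ^^ (i + (?d - j))"
      using \<open>f i = f j\<close> by (auto simp: relpow_add)
    then show ?thesis using dist_le_relpow that by fastforce
  qed
  then have "inj_on f {0..?d}"
    by (metis atLeastAtMost_iff inj_onI linorder_neqE_nat)
  then show ?thesis using that f walk by blast
qed

lemma walk_subset:
  assumes "E \<subseteq> V \<times> V" "f 0 \<in> V" "\<forall>t<d. (f t, f (Suc t)) \<in> E"
  shows "f ` {0..d} \<subseteq> V"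
proof -
  have "f t \<in> V" if "t \<le> d" for t
  proof (cases t)
    case (Suc s)
    then have "(f s, f t) \<in> E" using that assms(3) by auto
    then show ?thesis using assms(1) by auto
  qed (use assms in simp)
  then show ?thesis by auto
qed

lemma dist_le_card:
  assumes "strongly_connected V E" "finite V" "u \<in> V" "v \<in> V"
  shows "dist E u v \<le> card V - 1"
proof -
  have "(u, v) \<in> E\<^sup>*" and EV: "E \<subseteq> V \<times> V"
    using assms unfolding strongly_connected_def by blast+
  obtain f where f: "f 0 = u" "\<forall>t<dist E u v. (f t, f (Suc t)) \<in> E"
    "inj_on f {0..dist E u v}"
    using shortest_walk[OF \<open>(u, v) \<in> E\<^sup>*\<close>] by blast
  have "Suc (dist E u v) = card (f ` {0..dist E u v})"
    using card_image[OF f(3)] by simp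
  also have "\<dots> \<le> card V"
    using walk_subset[OF EV _ f(2)] f(1) assms(2,3) by (intro card_mono) auto
  finally show ?thesis by simp
qed

fun path_cost :: "('a \<times> 'a) set \<Rightarrow> 'a list \<Rightarrow> nat" where
  "path_cost E (x # y # zs) = dist E x y + path_cost E (y # zs)"
| "path_cost E _ = 0"

lemma path_cost_conv_sum:
  "path_cost E xs = (\<Sum>i < length xs - 1. dist E (xs ! i) (xs ! Suc i))"
  by (induction E xs rule: path_cost.induct) (simp_all del: sum.lessThan_Suc add: sum.lessThan_Suc_shift)

lemma comm_time_conv_path_cost:
  "comm_time V E \<pi> = path_cost E (map (inv_into V \<pi>) [1..<Suc (card V)])"
  unfolding comm_time_def path_cost_conv_sum
  by (cases "card V")
    (simp_all del: upt_Suc sum.op_ivl_Suc add: atLeast0LessThan[symmetric] sum.shift_bounds_Suc_ivl)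

definition list_orderings :: "'a set \<Rightarrow> 'a list set" where
  "list_orderings V = {xs. set xs = V \<and> distinct xs}"

lemma finite_list_orderings: "finite V \<Longrightarrow> finite (list_orderings V)"
  unfolding list_orderings_def
  by (rule finite_subset[OF _ finite_subset_distinct]) auto

lemma list_orderings_nonempty: "finite V \<Longrightarrow> list_orderings V \<noteq> {}"
  unfolding list_orderings_def using finite_distinct_list by blast

lemma length_list_orderings: "xs \<in> list_orderings V \<Longrightarrow> length xs = card V"
  unfolding list_orderings_def by (auto simp: distinct_card)

lemma orderings_conv_list_orderings:
  "(\<lambda>\<pi>. map (inv_into V \<pi>) [1..<Suc (card V)]) ` orderings V = list_orderings V"
proof (intro equalityI subsetI)
  fix xs assume "xs \<in> (\<lambda>\<pi>. map (inv_into V \<pi>) [1..<Suc (card V)]) ` orderings V"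
  then obtain \<pi> where \<pi>: "bij_betw \<pi> V {1..card V}"
    and xs: "xs = map (inv_into V \<pi>) [1..<Suc (card V)]"
    unfolding orderings_def by blast
  have "bij_betw (inv_into V \<pi>) {1..card V} V" using bij_betw_inv_into[OF \<pi>] .
  then show "xs \<in> list_orderings V"
    unfolding list_orderings_def xs bij_betw_def
    by (simp del: upt_Suc add: distinct_map atLeastLessThanSuc_atLeastAtMost)
next
  fix xs assume "xs \<in> list_orderings V"
  then have xs: "set xs = V" "distinct xs" and len: "length xs = card V"
    using length_list_orderings unfolding list_orderings_def by auto
  define g where "g i = xs ! (i - 1)" for i
  have "bij_betw g {1..card V} V"
  proof -
    have "bij_betw ((!) xs) {..<card V} V" using bij_betw_nth xs len by fastforce
    moreover have "bij_betw (\<lambda>i. i - 1) {1..card V} {..<card V}"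
      by (rule bij_betw_byWitness[where f'="\<lambda>i. i + 1"]) auto
    ultimately show ?thesis using bij_betw_trans unfolding g_def comp_def by fastforce
  qed
  then have "inv_into {1..card V} g \<in> orderings V"
    and "map (inv_into V (inv_into {1..card V} g)) [1..<Suc (card V)] = xs"
    using bij_betw_inv_into[of g] inv_into_inv_into_eq[of g]
    by (auto simp del: upt_Suc simp: orderings_def len g_def intro!: nth_equalityI)
  then show "xs \<in> (\<lambda>\<pi>. map (inv_into V \<pi>) [1..<Suc (card V)]) ` orderings V"
    by (metis image_eqI)
qed

lemma comm_time_image_orderings:
  "comm_time V E ` orderings V = path_cost E ` list_orderings V"
  unfolding comm_time_conv_path_cost orderings_conv_list_orderings[symmetric] image_image ..

lemma path_cost_le_sum:
  assumes "\<And>i. Suc i < length xs \<Longrightarrow> dist E (xs ! i) (xs ! Suc i) \<le> b i"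
  shows "path_cost E xs \<le> (\<Sum>i < length xs - 1. b i)"
  unfolding path_cost_conv_sum using assms by (intro sum_mono) auto

lemma path_cost_le:
  assumes "\<And>i. Suc i < length xs \<Longrightarrow> dist E (xs ! i) (xs ! Suc i) \<le> b"
  shows "path_cost E xs \<le> (length xs - 1) * b"
  using path_cost_le_sum[of xs E "\<lambda>_. b"] assms by simp

lemma path_cost_ge:
  assumes "\<And>i. Suc i < length xs \<Longrightarrow> b \<le> dist E (xs ! i) (xs ! Suc i)"
  shows "(length xs - 1) * b \<le> path_cost E xs"
proof -
  have "(\<Sum>i < length xs - 1. b) \<le> path_cost E xs"
    unfolding path_cost_conv_sum using assms by (intro sum_mono) auto
  then show ?thesis by simp
qed

lemma path_cost_walk_append_le:
  assumes walk: "\<forall>t<d. (f t, f (Suc t)) \<in> E"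
    and bound: "\<And>x y. x \<in> set (map f [0..<Suc d] @ ys) \<Longrightarrow> y \<in> set (map f [0..<Suc d] @ ys)
      \<Longrightarrow> dist E x y \<le> b"
  shows "path_cost E (map f [0..<Suc d] @ ys) \<le> d + length ys * b"
proof -
  let ?xs = "map f [0..<Suc d] @ ys"
  have "dist E (?xs ! i) (?xs ! Suc i) \<le> (if i < d then 1 else b)" if "Suc i < length ?xs" for i
  proof (cases "i < d")
    case True
    then have "(?xs ! i, ?xs ! Suc i) \<in> E ^^ 1"
      using walk by (simp add: nth_append del: upt_Suc)
    then show ?thesis using True dist_le_relpow by fastforce
  next
    case False
    have "i < length ?xs" "Suc i < length ?xs" using that by auto
    then show ?thesis using False bound[OF nth_mem nth_mem] by presburger
  qed
  then have "path_cost E ?xs \<le> (\<Sum>i < length ?xs - 1. if i < d then 1 else b)"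
    by (rule path_cost_le_sum)
  also have "\<dots> = d + length ys * b"
  proof -
    have "{..<length ?xs - 1} \<inter> {i. i < d} = {..<d}"
      and "{..<length ?xs - 1} \<inter> - {i. i < d} = {d..<d + length ys}" by auto
    then show ?thesis by (simp add: sum.If_cases)
  qed
  finally show ?thesis .
qed

text \<open>With \<open>a = c div 2\<close> and \<open>b = (c + 1) div 2\<close>, \<open>a b - D (c - D) = (D - a) (D - b) \<ge> 0\<close>
  since no integer lies strictly between \<open>a\<close> and \<open>b\<close>.\<close>
lemma mult_diff_le_floor_ceil:
  fixes D c :: nat
  assumes "D \<le> c"
  shows "D * (c - D) \<le> (c div 2) * ((c + 1) div 2)"
proof -
  define a where "a = int (c div 2)"
  define b where "b = int ((c + 1) div 2)"
  have c: "int c = a + b" and ab: "a \<le> b" "b \<le> a + 1"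
    unfolding a_def b_def by linarith+
  have "0 \<le> (int D - a) * (int D - b)"
    using ab by (cases "int D \<le> a") (auto intro: mult_nonpos_nonpos)
  then have "int D * (int c - int D) \<le> a * b"
    unfolding c by (simp add: algebra_simps)
  moreover have "int (D * (c - D)) = int D * (int c - int D)"
    using assms by (simp add: of_nat_diff)
  ultimately show ?thesis
    unfolding a_def b_def by (simp flip: of_nat_mult)
qed

lemma list_ordering_cost_le_floor_ceil:
  assumes sc: "strongly_connected V E" and fin: "finite V" and ne: "V \<noteq> {}"
  obtains xs where "xs \<in> list_orderings V" "path_cost E xs \<le> (card V div 2) * ((card V + 1) div 2)"
proof -
  have EV: "E \<subseteq> V \<times> V" and reach: "\<forall>x\<in>V. \<forall>y\<in>V. (x, y) \<in> E\<^sup>*"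
    using sc unfolding strongly_connected_def by blast+
  define D where "D = Max ((\<lambda>(x, y). dist E x y) ` (V \<times> V))"
  have diam: "dist E x y \<le> D" if "x \<in> V" "y \<in> V" for x y
    unfolding D_def using fin that by (intro Max_ge) auto
  have "D \<in> (\<lambda>(x, y). dist E x y) ` (V \<times> V)"
    unfolding D_def using fin ne by (intro Max_in) auto
  then obtain u v where uv: "u \<in> V" "v \<in> V" and D: "D = dist E u v" by auto
  obtain f where f: "f 0 = u" "\<forall>t<D. (f t, f (Suc t)) \<in> E" "inj_on f {0..D}"
    using shortest_walk[of u v E] reach uv unfolding D by blast
  have fV: "f ` {0..D} \<subseteq> V" using walk_subset[OF EV _ f(2)] f(1) uv by simp
  obtain ys where ys: "set ys = V - f ` {0..D}" "distinct ys"
    using finite_distinct_list[of "V - f ` {0..D}"] fin by blast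
  define xs where "xs = map f [0..<Suc D] @ ys"
  have "set (map f [0..<Suc D]) = f ` {0..D}" and "distinct (map f [0..<Suc D])"
    using f(3) by (auto simp: distinct_map atLeastLessThanSuc_atLeastAtMost simp del: upt_Suc)
  then have xs: "xs \<in> list_orderings V"
    using ys fV unfolding xs_def list_orderings_def by auto
  then have len: "Suc D + length ys = card V"
    using length_list_orderings[OF xs] unfolding xs_def by simp
  have "path_cost E xs \<le> D + length ys * D"
    unfolding xs_def using f(2) xs diam
    by (intro path_cost_walk_append_le) (auto simp: list_orderings_def xs_def)
  also have "\<dots> = D * (card V - D)" using len by (simp flip: len)
  also have "\<dots> \<le> (card V div 2) * ((card V + 1) div 2)"
    using len by (intro mult_diff_le_floor_ceil) simp
  finally show ?thesis using xs that by blast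
qed

lemma path_cost_le_Cons: "path_cost E zs \<le> path_cost E (x # zs)"
  by (cases zs) simp_all

lemma path_cost_Cons_le:
  assumes "strongly_connected V E" "x \<in> V" "y \<in> V" "set zs \<subseteq> V"
  shows "path_cost E (x # zs) \<le> dist E x y + path_cost E (y # zs)"
proof (cases zs)
  case (Cons z zs')
  then have "dist E x z \<le> dist E x y + dist E y z"
    using assms by (intro dist_triangle) (auto simp: strongly_connected_def)
  then show ?thesis using Cons by simp
qed simp

lemma path_cost_Cons_filter_le:
  assumes sc: "strongly_connected V E" and "x \<in> V" "set ys \<subseteq> V"
  shows "path_cost E (x # filter P ys) \<le> path_cost E (x # ys)"
  using assms(2,3)
proof (induction ys arbitrary: x)
  case (Cons y ys)
  show ?case
  proof (cases "P y")
    case False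
    have "path_cost E (x # filter P ys) \<le> dist E x y + path_cost E (y # filter P ys)"
      using Cons.prems by (intro path_cost_Cons_le[OF sc]) auto
    also have "\<dots> \<le> dist E x y + path_cost E (y # ys)"
      using Cons by simp
    finally show ?thesis using False by simp
  qed (use Cons in simp)
qed simp

text \<open>By the triangle inequality, skipping vertices never makes a tour longer.\<close>
lemma path_cost_filter_le:
  assumes sc: "strongly_connected V E" and "set xs \<subseteq> V"
  shows "path_cost E (filter P xs) \<le> path_cost E xs"
proof (cases xs)
  case (Cons x ys)
  have "path_cost E (filter P xs) \<le> path_cost E (x # filter P ys)"
    using Cons path_cost_le_Cons[of E "filter P ys" x] by simp
  also have "\<dots> \<le> path_cost E xs"
    using Cons assms path_cost_Cons_filter_le[OF sc, of x ys P] by simp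
  finally show ?thesis .
qed simp

lemma path_cost_le_card:
  assumes "strongly_connected V E" "finite V" "set xs \<subseteq> V"
  shows "path_cost E xs \<le> (length xs - 1) * (card V - 1)"
proof (rule path_cost_le)
  fix i assume "Suc i < length xs"
  then have "xs ! i \<in> set xs" "xs ! Suc i \<in> set xs" by simp_all
  then show "dist E (xs ! i) (xs ! Suc i) \<le> card V - 1"
    using assms(3) by (intro dist_le_card[OF assms(1,2)]) auto
qed

lemma T_min_conv_path_cost: "T_min V E = Min (path_cost E ` list_orderings V)"
  unfolding T_min_def comm_time_image_orderings ..

lemma T_max_conv_path_cost: "T_max V E = Max (path_cost E ` list_orderings V)"
  unfolding T_max_def comm_time_image_orderings ..

lemma T_min_le_floor_ceil:
  assumes "strongly_connected V E" "finite V" "V \<noteq> {}"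
  shows "T_min V E \<le> (card V div 2) * ((card V + 1) div 2)"
proof -
  obtain xs where "xs \<in> list_orderings V" "path_cost E xs \<le> (card V div 2) * ((card V + 1) div 2)"
    using list_ordering_cost_le_floor_ceil[OF assms] .
  then show ?thesis
    unfolding T_min_conv_path_cost
    using finite_list_orderings[OF assms(2)] by (meson Min_le finite_imageI image_eqI order_trans)
qed

lemma T_max_le_square:
  assumes "strongly_connected V E" "finite V"
  shows "T_max V E \<le> (card V - 1) ^ 2"
proof -
  have "path_cost E xs \<le> (card V - 1) * (card V - 1)" if "xs \<in> list_orderings V" for xs
    using path_cost_le_card[OF assms, of xs] that
    by (simp add: length_list_orderings list_orderings_def)
  then show ?thesis
    unfolding T_max_conv_path_cost power2_eq_square
    using finite_list_orderings[OF assms(2)] list_orderings_nonempty[OF assms(2)]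
    by (simp add: Max_le_iff)
qed

text \<open>The cycle \<open>0 \<rightarrow> 1 \<rightarrow> \<dots> \<rightarrow> k - 1 \<rightarrow> * \<rightarrow> 0\<close> with \<open>*\<close> replaced by the copies \<open>k, \<dots>, n - 1\<close>;
  \<open>min v k\<close> is the position of \<open>v\<close> on the cycle.\<close>
definition cycle_blowup :: "nat \<Rightarrow> nat \<Rightarrow> (nat \<times> nat) set" where
  "cycle_blowup k n = {(i, Suc i) | i. Suc i < k} \<union> {(k - 1, l) | l. k \<le> l \<and> l < n}
      \<union> {(l, 0) | l. k \<le> l \<and> l < n}"

lemma cycle_blowup_path: "j < k \<Longrightarrow> i \<le> j \<Longrightarrow> (i, j) \<in> (cycle_blowup k n)\<^sup>*"
proof (induction j)
  case (Suc j)
  show ?case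
  proof (cases "i = Suc j")
    case False
    then have "(i, j) \<in> (cycle_blowup k n)\<^sup>*" using Suc by simp
    moreover have "(j, Suc j) \<in> cycle_blowup k n" using Suc.prems unfolding cycle_blowup_def by blast
    ultimately show ?thesis by (rule rtrancl_into_rtrancl)
  qed simp
qed simp

lemma strongly_connected_cycle_blowup:
  assumes "1 \<le> k" "k < n"
  shows "strongly_connected {0..<n} (cycle_blowup k n)"
proof -
  let ?E = "cycle_blowup k n"
  have to_root: "(v, 0) \<in> ?E\<^sup>*" if "v < n" for v
  proof (cases "k \<le> v")
    case False
    then have "(v, k - 1) \<in> ?E\<^sup>*" using cycle_blowup_path assms by simp
    moreover have "(k - 1, k) \<in> ?E" "(k, 0) \<in> ?E" using assms unfolding cycle_blowup_def by blast+
    ultimately show ?thesis by (meson rtrancl_into_rtrancl)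
  next
    case True
    then have "(v, 0) \<in> ?E" using that unfolding cycle_blowup_def by blast
    then show ?thesis by (rule r_into_rtrancl)
  qed
  have from_root: "(0, v) \<in> ?E\<^sup>*" if "v < n" for v
  proof (cases "k \<le> v")
    case True
    have "(0, k - 1) \<in> ?E\<^sup>*" using cycle_blowup_path assms by simp
    moreover have "(k - 1, v) \<in> ?E" using True that unfolding cycle_blowup_def by blast
    ultimately show ?thesis by (rule rtrancl_into_rtrancl)
  qed (simp add: cycle_blowup_path)
  show ?thesis unfolding strongly_connected_def
  proof (intro conjI ballI)
    show "?E \<subseteq> {0..<n} \<times> {0..<n}" using assms unfolding cycle_blowup_def by auto
    fix u v assume "u \<in> {0..<n}" "v \<in> {0..<n}"
    then show "(u, v) \<in> ?E\<^sup>*" using to_root from_root by (meson atLeastLessThan_iff rtrancl_trans)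
  qed
qed

lemma cycle_blowup_edge_phase:
  assumes "1 \<le> k" "(x, y) \<in> cycle_blowup k n"
  shows "Suc (min x k) mod (k + 1) = min y k"
  using assms(2) unfolding cycle_blowup_def
proof (elim UnE CollectE exE conjE)
  fix l assume "(x, y) = (l, 0)" "k \<le> l"
  then show ?thesis by simp
next
  fix l assume "(x, y) = (k - 1, l)" "k \<le> l"
  then show ?thesis using assms(1) by simp
next
  fix i assume "(x, y) = (i, Suc i)" "Suc i < k"
  then show ?thesis by simp
qed

lemma cycle_blowup_relpow_phase:
  assumes "1 \<le> k" "(x, y) \<in> cycle_blowup k n ^^ t"
  shows "(min x k + t) mod (k + 1) = min y k"
  using assms(2)
proof (induction t arbitrary: y)
  case (Suc t)
  then obtain z where z: "(x, z) \<in> cycle_blowup k n ^^ t" "(z, y) \<in> cycle_blowup k n" by auto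
  have "(min x k + Suc t) mod (k + 1) = Suc ((min x k + t) mod (k + 1)) mod (k + 1)"
    by (simp add: mod_Suc_eq)
  also have "\<dots> = min y k"
    using Suc.IH[OF z(1)] cycle_blowup_edge_phase[OF assms(1) z(2)] by simp
  finally show ?case .
qed simp

lemma cycle_blowup_dist_ge:
  assumes "1 \<le> k" "k < n" "k \<le> x" "k \<le> y" "x < n" "y < n" "x \<noteq> y"
  shows "k + 1 \<le> dist (cycle_blowup k n) x y"
proof -
  let ?t = "dist (cycle_blowup k n) x y"
  have "(x, y) \<in> cycle_blowup k n ^^ ?t"
    using strongly_connected_cycle_blowup[OF assms(1,2)] assms(5,6)
    unfolding strongly_connected_def by (intro relpow_dist) auto
  then have "(k + ?t) mod (k + 1) = k mod (k + 1)"
    using cycle_blowup_relpow_phase[OF assms(1)] assms(3,4) by fastforce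
  then have "k + 1 dvd ?t" using mod_eq_dvd_iff_nat[of k "k + ?t" "k + 1"] by simp
  moreover have "?t \<noteq> 0"
  proof
    assume "?t = 0"
    then show False using \<open>(x, y) \<in> _ ^^ ?t\<close> assms(7) by simp
  qed
  ultimately show ?thesis using dvd_imp_le[of "k + 1" ?t] by simp
qed

lemma cycle_blowup_path_cost_ge:
  assumes "1 \<le> k" "k < n" "xs \<in> list_orderings {0..<n}"
  shows "(n - k - 1) * (k + 1) \<le> path_cost (cycle_blowup k n) xs"
proof -
  let ?E = "cycle_blowup k n"
  let ?ys = "filter (\<lambda>v. k \<le> v) xs"
  have xs: "set xs = {0..<n}" "distinct xs" using assms(3) unfolding list_orderings_def by auto
  have "set ?ys = {k..<n}" "distinct ?ys" using xs by auto
  then have len: "length ?ys = n - k" using distinct_card by fastforce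
  have "(length ?ys - 1) * (k + 1) \<le> path_cost ?E ?ys"
  proof (rule path_cost_ge)
    fix i assume i: "Suc i < length ?ys"
    then have "?ys ! i \<in> {k..<n}" "?ys ! Suc i \<in> {k..<n}" "?ys ! i \<noteq> ?ys ! Suc i"
      using nth_mem[of i ?ys] nth_mem[of "Suc i" ?ys] nth_eq_iff_index_eq[OF \<open>distinct ?ys\<close>]
        \<open>set ?ys = {k..<n}\<close> by auto
    then show "k + 1 \<le> dist ?E (?ys ! i) (?ys ! Suc i)"
      by (intro cycle_blowup_dist_ge[OF assms(1,2)]) auto
  qed
  also have "\<dots> \<le> path_cost ?E xs"
    using path_cost_filter_le[OF strongly_connected_cycle_blowup[OF assms(1,2)]] xs by simp
  finally show ?thesis unfolding len .
qed

definition cycle :: "nat \<Rightarrow> (nat \<times> nat) set" where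
  "cycle n = {(i, Suc i mod n) | i. i < n}"

lemma cycle_relpow: "(u, v) \<in> cycle n ^^ t \<Longrightarrow> u < n \<Longrightarrow> v = (u + t) mod n"
proof (induction t arbitrary: v)
  case (Suc t)
  then obtain z where "(u, z) \<in> cycle n ^^ t" "(z, v) \<in> cycle n" by auto
  then have "z = (u + t) mod n" "v = Suc z mod n"
    using Suc unfolding cycle_def by auto
  then show ?case by (simp add: mod_Suc_eq)
qed simp

lemma strongly_connected_cycle:
  assumes "1 \<le> n"
  shows "strongly_connected {0..<n} (cycle n)"
proof -
  have reach: "(u, (u + t) mod n) \<in> (cycle n)\<^sup>*" if "u < n" for u t
  proof (induction t)
    case (Suc t)
    have "((u + t) mod n, (u + Suc t) mod n) \<in> cycle n"
      using that unfolding cycle_def by (auto simp: mod_Suc_eq)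
    with Suc show ?case by (rule rtrancl_into_rtrancl)
  qed (use that in simp)
  show ?thesis unfolding strongly_connected_def
  proof (intro conjI ballI)
    show "cycle n \<subseteq> {0..<n} \<times> {0..<n}" using assms unfolding cycle_def by auto
    fix u v assume "u \<in> {0..<n}" "v \<in> {0..<n}"
    then show "(u, v) \<in> (cycle n)\<^sup>*" using reach[of u "v + n - u"] by simp
  qed
qed

lemma cycle_dist_predecessor:
  assumes "1 \<le> u" "u < n"
  shows "n - 1 \<le> dist (cycle n) u (u - 1)"
proof -
  let ?t = "dist (cycle n) u (u - 1)"
  have "(u, u - 1) \<in> cycle n ^^ ?t"
    using strongly_connected_cycle[of n] assms
    unfolding strongly_connected_def by (intro relpow_dist) auto
  then have "(u - 1 + Suc ?t) mod n = (u - 1) mod n"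
    using cycle_relpow assms by fastforce
  then have "n dvd Suc ?t" by (simp add: mod_eq_dvd_iff_nat)
  then show ?thesis using dvd_imp_le[of n "Suc ?t"] by simp
qed

lemma cycle_path_cost_rev_upt: "(n - 1) * (n - 1) \<le> path_cost (cycle n) (rev [0..<n])"
proof -
  have "n - 1 \<le> dist (cycle n) (rev [0..<n] ! i) (rev [0..<n] ! Suc i)" if "Suc i < n" for i
    using cycle_dist_predecessor[of "n - Suc i" n] that by (simp add: rev_nth)
  then show ?thesis using path_cost_ge[of "rev [0..<n]" "n - 1" "cycle n"] by simp
qed

lemma T_min_cycle_blowup_ge:
  assumes "1 \<le> k" "k < n"
  shows "(n - k - 1) * (k + 1) \<le> T_min {0..<n} (cycle_blowup k n)"
  unfolding T_min_conv_path_cost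
  using cycle_blowup_path_cost_ge[OF assms] finite_list_orderings[of "{0..<n}"]
    list_orderings_nonempty[of "{0..<n}"]
  by (simp add: Min_ge_iff)

lemma T_max_cycle_ge: "(n - 1) ^ 2 \<le> T_max {0..<n} (cycle n)"
proof -
  have "rev [0..<n] \<in> list_orderings {0..<n}" unfolding list_orderings_def by simp
  then have "path_cost (cycle n) (rev [0..<n]) \<le> T_max {0..<n} (cycle n)"
    unfolding T_max_conv_path_cost by (intro Max_ge) (auto simp: finite_list_orderings)
  then show ?thesis
    using cycle_path_cost_rev_upt[of n] by (simp add: power2_eq_square)
qed

lemma is_maxI: "a \<in> S \<Longrightarrow> x \<le> a \<Longrightarrow> \<forall>y\<in>S. y \<le> x \<Longrightarrow> is_max S x"
  unfolding is_max_def using le_antisym by blast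

theorem proposition2:
  fixes n :: nat
  assumes "n \<ge> 3"
  shows "is_max {T_min {0..<n} E | E. strongly_connected {0..<n} E}
           ((n div 2) * ((n + 1) div 2))
       \<and> is_max {T_max {0..<n} E | E. strongly_connected {0..<n} E}
           ((n - 1) ^ 2)"
proof
  let ?V = "{0..<n}"
  have fin: "finite ?V" and ne: "?V \<noteq> {}" and card: "card ?V = n" using assms by auto
  define k where "k = (n + 1) div 2 - 1"
  have k: "1 \<le> k" "k < n" "(n - k - 1) * (k + 1) = (n div 2) * ((n + 1) div 2)"
    using assms unfolding k_def by auto
  have "(n div 2) * ((n + 1) div 2) \<le> T_min ?V (cycle_blowup k n)"
    using T_min_cycle_blowup_ge[OF k(1,2)] unfolding k(3) .
  then show "is_max {T_min ?V E | E. strongly_connected ?V E} ((n div 2) * ((n + 1) div 2))"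
    using strongly_connected_cycle_blowup[OF k(1,2)] T_min_le_floor_ceil[OF _ fin ne]
    by (intro is_maxI) (auto simp: card)
  show "is_max {T_max ?V E | E. strongly_connected ?V E} ((n - 1) ^ 2)"
    using strongly_connected_cycle[of n] assms T_max_cycle_ge[of n] T_max_le_square[OF _ fin]
    by (intro is_maxI) (auto simp: card)
qed

end
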